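(* Let $S_n(x)$ be the Stirling polynomials, defined by $\left(\frac{t}{1-e^{-t}}\right)^{x+1}=\sum_{n\ge0}S_n(x)\frac{t^n}{n!}$. Then for every $n\ge0$, $$S_n(x)=n!\sum_{k=0}^{n}\binom{k+x}{k}\sum_{j=0}^{k}\frac{j!\,(-1)^{n+j}}{(n+j)!}\binom{k}{j}\left\{{n+j\atop j}\right\}.$$ *)

theory Defs
  imports "HOL-Computational_Algebra.Formal_Power_Series" "HOL-Combinatorics.Stirling"
begin

text \<open>The formal power series t/(1 - e^(-t)), with constant term 1.\<close>
definition todd_fps :: "real fps" where
  "todd_fps = inverse (fps_shift 1 (1 - fps_exp (-1)))"

text \<open>Real power (1 + u)^a of a series with constant term 1, via the binomial series:
  f^a = (1+X)^a composed with (f - 1).\<close>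
definition fps_rpow :: "real fps \<Rightarrow> real \<Rightarrow> real fps" where
  "fps_rpow f a = fps_binomial a oo (f - 1)"

definition stirling_poly :: "nat \<Rightarrow> real \<Rightarrow> real" where
  "stirling_poly n x = fact n * fps_nth (fps_rpow todd_fps (x + 1)) n"

end

theory Submission
  imports Defs
begin

(*
  Proof idea.  Write D(t) = (1 - e^(-t))/t, so that t/(1 - e^(-t)) = 1/D and, by definition,
  S_n(x) = n! [t^n] (1/D)^(x+1).

  (1) Real powers of a series with constant term 1 obey (1/D)^a = D^(-a): both sides solve the
      same first-order linear ODE with the same initial value (fps_binomial_compose_unique).
  (2) Expanding D^(-(x+1)) = (1 + (D - 1))^(-(x+1)) by the binomial series and negating the upper
      index gives  sum_k binom(k+x, k) [t^n] (1 - D)^k.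
  (3) The binomial theorem expands (1 - D)^k into powers D^j, and [t^n] D^j is a coefficient of
      (1 - e^(-t))^j, which is given by the exponential generating function of the Stirling
      numbers of the second kind:  (e^(ct) - 1)^j = j! sum_m S(m,j) c^m t^m / m!.
*)

lemma fps_exp_minus_one_power_deriv:
  fixes c :: "'a::field_char_0"
  shows "fps_deriv ((fps_exp c - 1) ^ Suc j) =
           fps_const (of_nat (Suc j) * c) * ((fps_exp c - 1) ^ Suc j + (fps_exp c - 1) ^ j)"
proof -
  let ?Q = "fps_exp c - 1"
  have "fps_deriv (?Q ^ Suc j) = fps_const (of_nat (Suc j)) * fps_deriv ?Q * ?Q ^ j"
    using fps_deriv_power[of ?Q "Suc j"] by simp
  also have "fps_deriv ?Q = fps_const c * (?Q + 1)"
    by simp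
  finally show ?thesis
    by (simp add: algebra_simps)
qed

text \<open>Exponential generating function of the Stirling numbers of the second kind: comparing
  coefficients in the derivative formula above gives exactly the Stirling recurrence.\<close>

lemma fps_exp_minus_one_power_nth:
  fixes c :: "'a::field_char_0"
  shows "fps_nth ((fps_exp c - 1) ^ j) m = c ^ m * fact j * of_nat (Stirling m j) / fact m"
proof (induction m arbitrary: j)
  case 0
  then show ?case by (cases j) simp_all
next
  case (Suc m)
  show ?case
  proof (cases j)
    case 0
    then show ?thesis by simp
  next
    case (Suc i)
    let ?Q = "fps_exp c - 1"
    have "of_nat (Suc m) * fps_nth (?Q ^ Suc i) (Suc m) = fps_nth (fps_deriv (?Q ^ Suc i)) m"
      by (simp only: fps_deriv_nth) simp
    also have "\<dots> = of_nat (Suc i) * c * (fps_nth (?Q ^ Suc i) m + fps_nth (?Q ^ i) m)"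
      by (simp only: fps_exp_minus_one_power_deriv fps_mult_left_const_nth fps_add_nth)
    also have "\<dots> = c ^ Suc m * fact (Suc i) *
        of_nat (Suc i * Stirling m (Suc i) + Stirling m i) / fact m"
      unfolding Suc.IH by (simp add: field_simps)
    finally have "of_nat (Suc m) * fps_nth (?Q ^ Suc i) (Suc m) =
        c ^ Suc m * fact (Suc i) * of_nat (Stirling (Suc m) (Suc i)) / fact m"
      by (simp del: power_Suc)
    then show ?thesis
      using Suc by (simp add: field_simps del: power_Suc of_nat_Suc)
  qed
qed

lemma fps_binomial_compose_ode:
  fixes g :: "'a::field_char_0 fps"
  assumes g0: "fps_nth g 0 = 0"
  shows "(1 + g) * fps_deriv (fps_binomial c oo g) =
           fps_const c * (fps_binomial c oo g) * fps_deriv g"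
proof -
  have unit: "fps_nth (1 + fps_X :: 'a fps) 0 \<noteq> 0"
    by simp
  have "(1 + fps_X) * fps_deriv (fps_binomial c) =
      (1 + fps_X) * inverse (1 + fps_X) * (fps_const c * fps_binomial c)"
    by (simp add: fps_binomial_deriv fps_divide_unit unit algebra_simps)
  also have "\<dots> = fps_const c * fps_binomial c"
    by (simp add: inverse_mult_eq_1'[OF unit])
  finally have "(1 + fps_X) * fps_deriv (fps_binomial c) = fps_const c * fps_binomial c" .
  then have "((1 + fps_X) * fps_deriv (fps_binomial c)) oo g = (fps_const c * fps_binomial c) oo g"
    by simp
  then have "(1 + g) * (fps_deriv (fps_binomial c) oo g) = fps_const c * (fps_binomial c oo g)"
    by (simp add: fps_compose_mult_distrib[OF g0] fps_compose_add_distrib g0)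
  then show ?thesis
    by (simp add: fps_compose_deriv[OF g0] mult.assoc[symmetric])
qed

text \<open>Conversely (1 + g)^c is the only solution with F(0) = 1, since the quotient of two solutions
  has derivative 0.\<close>

lemma fps_binomial_compose_unique:
  fixes F g :: "'a::field_char_0 fps"
  assumes g0: "fps_nth g 0 = 0" and F0: "fps_nth F 0 = 1"
    and ode: "(1 + g) * fps_deriv F = fps_const c * F * fps_deriv g"
  shows "F = fps_binomial c oo g"
proof -
  define B where "B = fps_binomial c oo g"
  have B0: "fps_nth B 0 = 1"
    by (simp add: B_def)
  have B_inv: "B * inverse B = 1"
    using B0 by (simp add: inverse_mult_eq_1')
  have odeB: "(1 + g) * fps_deriv B = fps_const c * B * fps_deriv g"
    unfolding B_def using g0 by (rule fps_binomial_compose_ode)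
  define K where "K = F * inverse B"
  have dK: "fps_deriv K = fps_deriv F * inverse B - F * fps_deriv B * (inverse B)\<^sup>2"
    by (simp add: K_def fps_inverse_deriv B0 algebra_simps)
  have "(1 + g) * fps_deriv K =
      ((1 + g) * fps_deriv F) * inverse B - F * ((1 + g) * fps_deriv B) * (inverse B)\<^sup>2"
    unfolding dK by (simp add: algebra_simps)
  also have "\<dots> = fps_const c * F * fps_deriv g * (inverse B - (B * inverse B) * inverse B)"
    unfolding ode odeB by (simp add: power2_eq_square algebra_simps)
  also have "\<dots> = 0"
    by (simp add: B_inv)
  finally have "(1 + g) * fps_deriv K = 0" .
  moreover have "fps_nth (1 + g) 0 \<noteq> 0"
    using g0 by simp
  ultimately have "fps_deriv K = 0"
    by (metis fps_nonzero_nth mult_eq_0_iff)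
  then have "K = fps_const (fps_nth K 0)"
    by (simp only: fps_deriv_eq_0_iff)
  also have "fps_nth K 0 = 1"
    by (simp add: K_def B0 F0)
  finally have "K = 1"
    by simp
  then show ?thesis
    using B_inv unfolding K_def B_def[symmetric]
    by (metis mult.assoc mult.commute mult.left_neutral)
qed

text \<open>Real powers of a reciprocal: (1/S)^a = S^(-a) for S(0) = 1, since S^(-a) solves the ODE
  characterising (1 + (1/S - 1))^a.\<close>

lemma fps_binomial_compose_inverse:
  fixes S :: "'a::field_char_0 fps"
  assumes S0: "fps_nth S 0 = 1"
  shows "fps_binomial a oo (inverse S - 1) = fps_binomial (-a) oo (S - 1)"
proof -
  define T where "T = inverse S"
  define H where "H = fps_binomial (-a) oo (S - 1)"
  have ST: "S * T = 1"
    unfolding T_def using S0 by (simp add: inverse_mult_eq_1')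
  have dT: "fps_deriv T = - fps_deriv S * T\<^sup>2"
    unfolding T_def using S0 by (simp add: fps_inverse_deriv)
  have odeH: "S * fps_deriv H = - fps_const a * H * fps_deriv S"
    using fps_binomial_compose_ode[of "S - 1" "-a"] S0 by (simp add: H_def)
  have "T * fps_deriv H = T\<^sup>2 * (S * fps_deriv H)"
    using ST by (simp add: power2_eq_square algebra_simps)
  also have "\<dots> = fps_const a * H * fps_deriv T"
    unfolding odeH dT by (simp add: algebra_simps del: fps_const_neg)
  finally have "(1 + (T - 1)) * fps_deriv H = fps_const a * H * fps_deriv (T - 1)"
    by simp
  moreover have "fps_nth (T - 1) 0 = 0" "fps_nth H 0 = 1"
    using S0 by (simp_all add: T_def H_def)
  ultimately have "H = fps_binomial a oo (T - 1)"
    by (intro fps_binomial_compose_unique)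
  then show ?thesis
    by (simp add: T_def H_def)
qed

lemma fps_neg_one_power: "(-1 :: 'a::comm_ring_1 fps) ^ k = fps_const ((-1) ^ k)"
  by (induction k) simp_all

lemma fps_one_minus_power_nth:
  fixes f :: "'a::comm_ring_1 fps"
  shows "fps_nth ((1 - f) ^ k) n = (\<Sum>j=0..k. of_nat (k choose j) * (-1) ^ j * fps_nth (f ^ j) n)"
proof -
  have "(1 - f) ^ k = (\<Sum>j\<le>k. of_nat (k choose j) * (- f) ^ j * 1 ^ (k - j))"
    using binomial_ring[of "- f" 1 k] by simp
  also have "\<dots> = (\<Sum>j=0..k. fps_const (of_nat (k choose j) * (-1) ^ j) * f ^ j)"
  proof (intro sum.cong)
    fix j
    have "of_nat (k choose j) * (- f) ^ j * 1 ^ (k - j) =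
        fps_const (of_nat (k choose j)) * ((-1) ^ j * f ^ j)"
      by (simp only: power_minus[of f j] fps_of_nat power_one mult_1_right)
    then show "of_nat (k choose j) * (- f) ^ j * 1 ^ (k - j) =
        fps_const (of_nat (k choose j) * (-1) ^ j) * f ^ j"
      by (simp only: fps_neg_one_power fps_const_mult[symmetric] mult.assoc)
  qed auto
  finally show ?thesis
    by (simp add: fps_sum_nth)
qed

text \<open>Negating the upper index of the binomial coefficient absorbs the sign of (f - 1)^k.\<close>

lemma gchoose_negated_times_power_nth:
  fixes f :: "'a::field_char_0 fps"
  shows "(-(a + 1) gchoose k) * fps_nth ((f - 1) ^ k) n =
           ((of_nat k + a) gchoose k) * fps_nth ((1 - f) ^ k) n"
proof -
  have "(f - 1) ^ k = fps_const ((-1) ^ k) * (1 - f) ^ k"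
    by (metis minus_diff_eq power_minus fps_neg_one_power)
  moreover have "(-(a + 1) gchoose k) = (-1) ^ k * ((of_nat k + a) gchoose k)"
    by (subst gbinomial_negated_upper) simp
  ultimately show ?thesis
    by simp
qed

definition todd_reciprocal_fps :: "'a::field_char_0 fps" where
  "todd_reciprocal_fps = fps_shift 1 (1 - fps_exp (-1))"

lemma todd_fps_eq_inverse: "todd_fps = inverse todd_reciprocal_fps"
  by (simp add: todd_fps_def todd_reciprocal_fps_def)

lemma todd_reciprocal_fps_nth_0: "fps_nth todd_reciprocal_fps 0 = 1"
  by (simp add: todd_reciprocal_fps_def)

text \<open>Since 1 - e^(-t) has no constant term, it equals D t, so [t^n] D^j = [t^(n+j)] (1 - e^(-t))^j,
  which the Stirling generating function evaluates at c = -1.\<close>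

lemma todd_reciprocal_power_nth:
  "fps_nth (todd_reciprocal_fps ^ j :: 'a::field_char_0 fps) n =
     (-1) ^ n * fact j * of_nat (Stirling (n + j) j) / fact (n + j)"
proof -
  let ?Q = "1 - fps_exp (-1) :: 'a fps"
  have "subdegree ?Q \<ge> 1"
    by (rule subdegree_geI) (auto simp: fps_eq_iff intro!: exI[of _ 1])
  then have "?Q = todd_reciprocal_fps * fps_X"
    unfolding todd_reciprocal_fps_def by (rule fps_shift_times_fps_X[symmetric])
  then have "fps_nth (todd_reciprocal_fps ^ j) n = fps_nth (?Q ^ j) (n + j)"
    by (simp add: power_mult_distrib fps_X_power_mult_right_nth)
  also have "?Q ^ j = fps_const ((-1) ^ j) * (fps_exp (-1) - 1) ^ j"
    by (metis minus_diff_eq power_minus fps_neg_one_power)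
  also have "fps_nth \<dots> (n + j) = (-1) ^ n * fact j * of_nat (Stirling (n + j) j) / fact (n + j)"
    by (simp add: fps_exp_minus_one_power_nth power_add)
  finally show ?thesis .
qed

lemma one_minus_todd_reciprocal_power_nth:
  "fps_nth ((1 - todd_reciprocal_fps) ^ k :: 'a::field_char_0 fps) n =
     (\<Sum>j=0..k. fact j * (-1) ^ (n + j) / fact (n + j) * of_nat (k choose j)
                 * of_nat (Stirling (n + j) j))"
  unfolding fps_one_minus_power_nth todd_reciprocal_power_nth
  by (intro sum.cong) (simp_all add: power_add)

theorem mainTheorem8:
  fixes n :: nat and x :: real
  shows "stirling_poly n x =
    fact n * (\<Sum>k=0..n. ((real k + x) gchoose k) *
      (\<Sum>j=0..k. fact j * (-1) ^ (n + j) / fact (n + j) * real (k choose j)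
                  * real (Stirling (n + j) j)))"
proof -
  let ?D = "todd_reciprocal_fps :: real fps"
  have "stirling_poly n x = fact n * fps_nth (fps_binomial (-(x + 1)) oo (?D - 1)) n"
    by (simp add: stirling_poly_def fps_rpow_def todd_fps_eq_inverse
        fps_binomial_compose_inverse todd_reciprocal_fps_nth_0)
  also have "fps_nth (fps_binomial (-(x + 1)) oo (?D - 1)) n =
      (\<Sum>k=0..n. ((real k + x) gchoose k) * fps_nth ((1 - ?D) ^ k) n)"
    unfolding fps_compose_nth fps_binomial_nth gchoose_negated_times_power_nth ..
  also have "\<dots> = (\<Sum>k=0..n. ((real k + x) gchoose k) *
      (\<Sum>j=0..k. fact j * (-1) ^ (n + j) / fact (n + j) * real (k choose j)
                  * real (Stirling (n + j) j)))"
    by (simp only: one_minus_todd_reciprocal_power_nth)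
  finally show ?thesis .
qed

end
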